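(* Let $G=(V,E)$ be a graph and let $\mathcal{M}$ be a nontrivial, unbounded graph matroid family with rank function $r$, dimensionality $d$, and threshold $t$. Suppose that $\mathcal{M}$ has the Lovász-Yemini property with constant $c$, i.e. every $c$-connected graph is $\mathcal{M}$-rigid. If $G$ is $(\max(t,c)+k)$-connected for some positive integer $k$, then $\mathcal{M}(G)$ is vertically $(k+1)$-connected.
   Context: All graphs are finite and simple and have no isolated vertices. A graph matroid family $\mathcal{M}$ assigns to every graph $G$ a matroid $\mathcal{M}(G)$ on $E(G)$ such that (i) every graph isomorphism $V(G)\to V(H)$ induces an isomorphism $\mathcal{M}(G)\to\mathcal{M}(H)$, and (ii) for every subgraph $H$ of $G$, $\mathcal{M}(H)$ is the restriction of $\mathcal{M}(G)$ to $E(H)$. $r(G)$ is the rank of $\mathcal{M}(G)$; $G$ is $\mathcal{M}$-rigid if $r(G)=r(K_{V(G)})$. $\mathcal{M}$ is nontrivial if some graph $G$ has $r(G)<|E(G)|$, unbounded if $r(K_n)$ is unbounded. An $\mathcal{M}$-circuit is a graph $C$ with $r(C)<|E(C)|$ and $r(C-e)=|E(C)|-1$ for all edges $e$. Dimensionality $d$: minimum over $\mathcal{M}$-circuits of (minimum degree $-1$); threshold $t$: minimum of $|V(C)|-1$ over $\mathcal{M}$-circuits $C$ of minimum degree $d+1$. For a matroid with rank function $r$ on ground set $E$ and positive integer $k$, a bipartition $(E_1,E_2)$ of $E$ is a vertical $k$-separation if $r(E_1),r(E_2)\ge k$ and $r(E_1)+r(E_2)\le r(E)+k-1$; the matroid is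 vertically $k$-connected if its rank is at least $k$ and it has no vertical $k'$-separation for any positive integer $k'<k$. *)

theory Defs
  imports Main
begin

(* Graphs: finite simple graphs without isolated vertices, represented by their
   edge set; vertices are natural numbers (every finite graph is isomorphic to one
   on nat); the vertex set is the union of the edges. *)

definition is_graph :: "nat set set \<Rightarrow> bool" where
  "is_graph E \<longleftrightarrow> finite E \<and> (\<forall>e\<in>E. card e = 2)"

definition verts :: "nat set set \<Rightarrow> nat set" where
  "verts E = \<Union>E"

definition complete_graph :: "nat set \<Rightarrow> nat set set" where
  "complete_graph V = {e. e \<subseteq> V \<and> card e = 2}"

definition matroid_on :: "'e set \<Rightarrow> ('e set \<Rightarrow> bool) \<Rightarrow> bool" where
  "matroid_on S indep \<longleftrightarrow> finite S \<and>
     (\<forall>X. indep X \<longrightarrow> X \<subseteq> S) \<and> indep {} \<and>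
     (\<forall>X Y. indep Y \<and> X \<subseteq> Y \<longrightarrow> indep X) \<and>
     (\<forall>X Y. indep X \<and> indep Y \<and> card X < card Y \<longrightarrow> (\<exists>y\<in>Y - X. indep (insert y X)))"

definition mrank :: "('e set \<Rightarrow> bool) \<Rightarrow> 'e set \<Rightarrow> nat" where
  "mrank indep X = Max {card Y | Y. Y \<subseteq> X \<and> indep Y}"

(* Graph matroid family: M E is the independence predicate of the matroid M(G)
   on the edge set E of the graph G *)
definition graph_matroid_family :: "(nat set set \<Rightarrow> nat set set \<Rightarrow> bool) \<Rightarrow> bool" where
  "graph_matroid_family M \<longleftrightarrow>
     (\<forall>E. is_graph E \<longrightarrow> matroid_on E (M E)) \<and>
     (\<forall>E f. is_graph E \<and> inj_on f (verts E) \<longrightarrow>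
        (\<forall>X. X \<subseteq> E \<longrightarrow> (M ((`) f ` E) ((`) f ` X) \<longleftrightarrow> M E X))) \<and>
     (\<forall>E H. is_graph E \<and> H \<subseteq> E \<longrightarrow> (\<forall>X. M H X \<longleftrightarrow> X \<subseteq> H \<and> M E X))"

definition grank :: "(nat set set \<Rightarrow> nat set set \<Rightarrow> bool) \<Rightarrow> nat set set \<Rightarrow> nat" where
  "grank M E = mrank (M E) E"

definition rigid :: "(nat set set \<Rightarrow> nat set set \<Rightarrow> bool) \<Rightarrow> nat set set \<Rightarrow> bool" where
  "rigid M E \<longleftrightarrow> grank M E = grank M (complete_graph (verts E))"

definition nontrivial_family :: "(nat set set \<Rightarrow> nat set set \<Rightarrow> bool) \<Rightarrow> bool" where
  "nontrivial_family M \<longleftrightarrow> (\<exists>E. is_graph E \<and> grank M E < card E)"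

definition unbounded_family :: "(nat set set \<Rightarrow> nat set set \<Rightarrow> bool) \<Rightarrow> bool" where
  "unbounded_family M \<longleftrightarrow> (\<forall>b. \<exists>n. grank M (complete_graph {0..<n}) > b)"

definition is_circuit :: "(nat set set \<Rightarrow> nat set set \<Rightarrow> bool) \<Rightarrow> nat set set \<Rightarrow> bool" where
  "is_circuit M C \<longleftrightarrow> is_graph C \<and> grank M C < card C \<and>
     (\<forall>e\<in>C. grank M (C - {e}) = card C - 1)"

definition degree :: "nat set set \<Rightarrow> nat \<Rightarrow> nat" where
  "degree E v = card {e\<in>E. v \<in> e}"

definition min_degree :: "nat set set \<Rightarrow> nat" where
  "min_degree E = Min (degree E ` verts E)"

definition dimensionality :: "(nat set set \<Rightarrow> nat set set \<Rightarrow> bool) \<Rightarrow> nat" where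
  "dimensionality M = (LEAST d. \<exists>C. is_circuit M C \<and> d = min_degree C - 1)"

definition threshold :: "(nat set set \<Rightarrow> nat set set \<Rightarrow> bool) \<Rightarrow> nat" where
  "threshold M = (LEAST t. \<exists>C. is_circuit M C \<and> min_degree C = dimensionality M + 1
                              \<and> t = card (verts C) - 1)"

definition connected_on :: "nat set set \<Rightarrow> nat set \<Rightarrow> bool" where
  "connected_on E W \<longleftrightarrow> W \<noteq> {} \<and>
     (\<forall>u\<in>W. \<forall>v\<in>W. (u, v) \<in> {(x, y). {x, y} \<in> E \<and> x \<in> W \<and> y \<in> W}\<^sup>*)"

definition k_connected :: "nat \<Rightarrow> nat set set \<Rightarrow> bool" where
  "k_connected k E \<longleftrightarrow> card (verts E) > k \<and>
     (\<forall>X. X \<subseteq> verts E \<and> card X < k \<longrightarrow> connected_on E (verts E - X))"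

definition lovasz_yemini :: "(nat set set \<Rightarrow> nat set set \<Rightarrow> bool) \<Rightarrow> nat \<Rightarrow> bool" where
  "lovasz_yemini M c \<longleftrightarrow> (\<forall>E. is_graph E \<and> k_connected c E \<longrightarrow> rigid M E)"

definition vertical_separation :: "('e set \<Rightarrow> bool) \<Rightarrow> 'e set \<Rightarrow> nat \<Rightarrow> 'e set \<Rightarrow> 'e set \<Rightarrow> bool" where
  "vertical_separation indep S k E1 E2 \<longleftrightarrow>
     E1 \<union> E2 = S \<and> E1 \<inter> E2 = {} \<and>
     mrank indep E1 \<ge> k \<and> mrank indep E2 \<ge> k \<and>
     mrank indep E1 + mrank indep E2 \<le> mrank indep S + k - 1"

definition vertically_connected :: "('e set \<Rightarrow> bool) \<Rightarrow> 'e set \<Rightarrow> nat \<Rightarrow> bool" where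
  "vertically_connected indep S k \<longleftrightarrow> mrank indep S \<ge> k \<and>
     (\<forall>k' E1 E2. 0 < k' \<and> k' < k \<longrightarrow> \<not> vertical_separation indep S k' E1 E2)"

end

theory Submission
  imports Defs
begin

(*
  Write r for the rank function of M, and d and t for its dimensionality and threshold.
  By induction on k, every bipartition (E1, E2) of the edges of a (max t c + k)-connected
  graph G satisfies  r G + min k (min (r E1) (r E2)) <= r E1 + r E2,  which rules out vertical
  k'-separations for k' <= k.  For the induction step pick a vertex v incident to both parts.
  G - v is (max t c + k - 1)-connected, hence rigid, and deleting v lowers r G by at most d:
  a circuit of minimum degree d + 1 on t + 1 vertices, placed in a complete graph with its
  minimum-degree vertex at v, shows  r (K (W + v)) <= r (K W) + d  whenever |W| >= t.
  Conversely, every vertex of a circuit has degree greater than d, so any at most d edges of E_i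
  at v are coloops once the other edges at v are removed; hence deleting v lowers r E_i by at
  least min (deg v) d.
  Finally, d >= 1 because M is unbounded, so stars are independent and r E_i >= deg v.
*)

section \<open>Matroids\<close>

locale matroid =
  fixes S :: "'e set" and indep :: "'e set \<Rightarrow> bool"
  assumes matroid_on: "matroid_on S indep"
begin

lemma finite_ground: "finite S"
  and indep_subset_ground: "indep X \<Longrightarrow> X \<subseteq> S"
  and indep_empty: "indep {}"
  and indep_subset: "indep Y \<Longrightarrow> X \<subseteq> Y \<Longrightarrow> indep X"
  and indep_augment: "indep X \<Longrightarrow> indep Y \<Longrightarrow> card X < card Y \<Longrightarrow> \<exists>y\<in>Y - X. indep (insert y X)"
  using matroid_on unfolding matroid_on_def by blast+

lemma indep_finite: "indep X \<Longrightarrow> finite X"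
  using finite_subset[OF indep_subset_ground finite_ground] .

lemma indep_card_le_ground: "indep X \<Longrightarrow> card X \<le> card S"
  by (simp add: card_mono finite_ground indep_subset_ground)

lemma finite_rank_candidates: "finite {card Y |Y. Y \<subseteq> X \<and> indep Y}"
proof -
  have "{card Y |Y. Y \<subseteq> X \<and> indep Y} \<subseteq> {..card S}"
    using indep_card_le_ground by auto
  then show ?thesis
    using finite_subset by blast
qed

lemma rank_ge_card_indep:
  assumes "B \<subseteq> X" "indep B"
  shows "card B \<le> mrank indep X"
proof -
  have "card B \<in> {card Y |Y. Y \<subseteq> X \<and> indep Y}"
    using assms by blast
  then show ?thesis
    unfolding mrank_def by (rule Max_ge[OF finite_rank_candidates])
qed

lemma obtain_basis:
  obtains B where "B \<subseteq> X" "indep B" "card B = mrank indep X"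
proof -
  have "{card Y |Y. Y \<subseteq> X \<and> indep Y} \<noteq> {}"
    using indep_empty by blast
  then have "mrank indep X \<in> {card Y |Y. Y \<subseteq> X \<and> indep Y}"
    unfolding mrank_def by (rule Max_in[OF finite_rank_candidates])
  then show ?thesis
    using that by auto
qed

lemma rank_le_card: "finite X \<Longrightarrow> mrank indep X \<le> card X"
proof -
  assume "finite X"
  obtain B where "B \<subseteq> X" "indep B" "card B = mrank indep X"
    by (rule obtain_basis)
  then show ?thesis
    using card_mono[OF \<open>finite X\<close> \<open>B \<subseteq> X\<close>] by simp
qed

lemma rank_mono: "X \<subseteq> Y \<Longrightarrow> mrank indep X \<le> mrank indep Y"
proof -
  assume "X \<subseteq> Y"
  obtain B where "B \<subseteq> X" "indep B" "card B = mrank indep X"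
    by (rule obtain_basis)
  then show ?thesis
    using rank_ge_card_indep[of B Y] \<open>X \<subseteq> Y\<close> by auto
qed

lemma rank_indep: "indep X \<Longrightarrow> mrank indep X = card X"
  using indep_finite rank_ge_card_indep[of X X] rank_le_card[of X] by simp

lemma indep_iff_rank_eq_card:
  assumes "finite X"
  shows "indep X \<longleftrightarrow> mrank indep X = card X"
proof
  assume "mrank indep X = card X"
  obtain B where "B \<subseteq> X" "indep B" "card B = mrank indep X"
    by (rule obtain_basis)
  then show "indep X"
    using card_subset_eq[OF assms] \<open>mrank indep X = card X\<close> by metis
qed (rule rank_indep)

lemma extend_to_basis:
  assumes "B \<subseteq> X" "indep B"
  obtains B' where "B \<subseteq> B'" "B' \<subseteq> X" "indep B'" "card B' = mrank indep X"
proof -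
  let ?P = "\<lambda>J. B \<subseteq> J \<and> J \<subseteq> X \<and> indep J"
  have bounded: "\<forall>J. ?P J \<longrightarrow> card J < Suc (card S)"
    using indep_card_le_ground le_imp_less_Suc by blast
  have "?P B"
    using assms by blast
  then have "\<exists>J. ?P J \<and> (\<forall>J'. ?P J' \<longrightarrow> card J' \<le> card J)"
    by (rule ex_has_greatest_nat[OF _ bounded])
  then obtain J where J: "?P J" and max: "\<And>J'. ?P J' \<Longrightarrow> card J' \<le> card J"
    by blast
  have "card J = mrank indep X"
  proof (rule ccontr)
    assume "card J \<noteq> mrank indep X"
    obtain Bx where Bx: "Bx \<subseteq> X" "indep Bx" "card Bx = mrank indep X"
      by (rule obtain_basis)
    have "card J \<le> mrank indep X"
      using J by (intro rank_ge_card_indep) auto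
    then have "card J < card Bx"
      using \<open>card J \<noteq> mrank indep X\<close> Bx(3) by linarith
    then obtain y where y: "y \<in> Bx - J" "indep (insert y J)"
      using indep_augment[of J Bx] J Bx(2) by blast
    then have "card (insert y J) \<le> card J"
      using J Bx(1) by (intro max) blast
    moreover have "card (insert y J) = Suc (card J)"
      using y(1) indep_finite[of J] J by simp
    ultimately show False
      by simp
  qed
  then show ?thesis using that J by blast
qed

lemma rank_submodular:
  "mrank indep (A \<union> B) + mrank indep (A \<inter> B) \<le> mrank indep A + mrank indep B"
proof -
  obtain I where I: "I \<subseteq> A \<inter> B" "indep I" "card I = mrank indep (A \<inter> B)"
    by (rule obtain_basis)
  obtain J where J: "I \<subseteq> J" "J \<subseteq> A \<union> B" "indep J" "card J = mrank indep (A \<union> B)"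
    using extend_to_basis[of I "A \<union> B"] I by blast
  have fin: "finite J" using J(3) indep_finite by blast
  have "card J + card I \<le> card (J \<inter> A) + card (J \<inter> B)"
  proof -
    have "card (J \<inter> A) + card (J \<inter> B) = card J + card (J \<inter> A \<inter> B)"
      using card_Un_Int[of "J \<inter> A" "J \<inter> B"] fin J(2)
      by (simp add: Int_Un_distrib[symmetric] Int_absorb2 Int_assoc Int_left_commute)
    moreover have "card I \<le> card (J \<inter> A \<inter> B)"
      using I J fin by (intro card_mono) auto
    ultimately show ?thesis by simp
  qed
  moreover have "card (J \<inter> A) \<le> mrank indep A" "card (J \<inter> B) \<le> mrank indep B"
    using J(3) by (auto intro: rank_ge_card_indep indep_subset)
  ultimately show ?thesis using I J by linarith
qed

lemma rank_Un_le: "mrank indep (A \<union> B) \<le> mrank indep A + mrank indep B"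
  using rank_submodular by (metis add_leD1)

lemma rank_Un_eq_of_insert_eq:
  assumes "finite F" "\<And>e. e \<in> F \<Longrightarrow> mrank indep (insert e Y) = mrank indep Y"
  shows "mrank indep (Y \<union> F) = mrank indep Y"
  using assms
proof (induction F rule: finite_induct)
  case empty
  then show ?case by simp
next
  case (insert x F)
  have "mrank indep (Y \<union> F \<union> insert x Y) + mrank indep ((Y \<union> F) \<inter> insert x Y)
      \<le> mrank indep (Y \<union> F) + mrank indep (insert x Y)"
    by (rule rank_submodular)
  moreover have "Y \<union> F \<union> insert x Y = Y \<union> insert x F"
    by blast
  moreover have "mrank indep Y \<le> mrank indep ((Y \<union> F) \<inter> insert x Y)"
    by (rule rank_mono) blast
  moreover have "mrank indep (Y \<union> F) \<le> mrank indep (Y \<union> insert x F)"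
    by (rule rank_mono) blast
  ultimately show ?case
    using insert by simp
qed

definition circuit :: "'e set \<Rightarrow> bool" where
  "circuit C \<longleftrightarrow> \<not> indep C \<and> (\<forall>e\<in>C. indep (C - {e}))"

lemma circuit_finite:
  assumes "circuit C"
  shows "finite C"
proof (cases "C = {}")
  case False
  then obtain e where "e \<in> C"
    by blast
  then have "finite (C - {e})"
    using assms indep_finite unfolding circuit_def by blast
  then show ?thesis
    by simp
qed simp

lemma dependent_contains_circuit:
  assumes "finite X" "\<not> indep X"
  obtains C where "C \<subseteq> X" "circuit C"
proof -
  let ?P = "\<lambda>C. C \<subseteq> X \<and> \<not> indep C"
  obtain C where C: "?P C" and min: "\<And>C'. ?P C' \<Longrightarrow> card C \<le> card C'"
    using ex_has_least_nat[of ?P X card] assms by blast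
  have "finite C"
    using C assms(1) finite_subset by blast
  have "indep (C - {e})" if "e \<in> C" for e
  proof (rule ccontr)
    assume "\<not> indep (C - {e})"
    then have "card C \<le> card (C - {e})"
      using min C by blast
    then show False
      using \<open>finite C\<close> \<open>e \<in> C\<close> card_Diff1_less[of C e] by linarith
  qed
  then show ?thesis
    using that C unfolding circuit_def by blast
qed

lemma rank_add_coloops:
  assumes "finite X" "D \<subseteq> X" and no_circuit: "\<And>C. C \<subseteq> X \<Longrightarrow> circuit C \<Longrightarrow> C \<inter> D = {}"
  shows "mrank indep X = mrank indep (X - D) + card D"
proof (rule antisym)
  have "mrank indep X \<le> mrank indep (X - D) + mrank indep D"
    using rank_Un_le[of "X - D" D] assms(2) by (simp add: Un_absorb2)
  then show "mrank indep X \<le> mrank indep (X - D) + card D"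
    using rank_le_card[OF finite_subset[OF assms(2,1)]] by linarith
next
  obtain B where B: "B \<subseteq> X - D" "indep B" "card B = mrank indep (X - D)"
    by (rule obtain_basis)
  have fin: "finite (B \<union> D)"
    using finite_subset[OF assms(2,1)] indep_finite[OF B(2)] by simp
  have "indep (B \<union> D)"
  proof (rule ccontr)
    assume "\<not> indep (B \<union> D)"
    then obtain C where C: "C \<subseteq> B \<union> D" "circuit C"
      using dependent_contains_circuit[OF fin] by blast
    then have "C \<subseteq> B"
      using no_circuit[of C] B(1) assms(2) by blast
    then show False
      using B(2) C(2) indep_subset unfolding circuit_def by blast
  qed
  moreover have "card (B \<union> D) = card B + card D"
    using B(1) fin by (intro card_Un_disjoint) auto
  ultimately show "mrank indep (X - D) + card D \<le> mrank indep X"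
    using rank_ge_card_indep[of "B \<union> D" X] B assms(2) by auto
qed

lemma rank_insert_eq_of_circuit:
  assumes "circuit C" "e \<in> C" "C - {e} \<subseteq> Y"
  shows "mrank indep (insert e Y) = mrank indep Y"
proof -
  have "finite C"
    using assms(1) circuit_finite by blast
  have "mrank indep C < card C"
    using assms(1) \<open>finite C\<close> rank_le_card indep_iff_rank_eq_card
    unfolding circuit_def by (metis le_neq_implies_less)
  moreover have "mrank indep (C - {e}) = card C - 1"
    using assms(1,2) \<open>finite C\<close> rank_indep unfolding circuit_def by simp
  moreover have "mrank indep (C - {e}) \<le> mrank indep (Y \<inter> C)"
    using assms(3) by (intro rank_mono) blast
  moreover have "mrank indep (insert e Y) \<le> mrank indep (Y \<union> C)"
    using assms(2) by (intro rank_mono) blast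
  moreover have "mrank indep Y \<le> mrank indep (insert e Y)"
    by (intro rank_mono) blast
  ultimately show ?thesis
    using rank_submodular[of Y C] by linarith
qed

end

lemma vertically_connected_if_rank_bound:
  assumes "k + 1 \<le> mrank indep S"
    and bound: "\<And>E1 E2. E1 \<union> E2 = S \<Longrightarrow> E1 \<inter> E2 = {} \<Longrightarrow>
      mrank indep S + min k (min (mrank indep E1) (mrank indep E2))
        \<le> mrank indep E1 + mrank indep E2"
  shows "vertically_connected indep S (k + 1)"
  unfolding vertically_connected_def
proof (intro conjI allI impI notI)
  fix k' E1 E2
  assume "0 < k' \<and> k' < k + 1" and "vertical_separation indep S k' E1 E2"
  then show False
    using bound[of E1 E2] unfolding vertical_separation_def by auto
qed (fact assms(1))

section \<open>Graphs and vertex connectivity\<close>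

lemma is_graph_subset: "is_graph U \<Longrightarrow> X \<subseteq> U \<Longrightarrow> is_graph X"
  unfolding is_graph_def by (meson finite_subset subsetD)

lemma finite_verts: "is_graph E \<Longrightarrow> finite (verts E)"
  unfolding is_graph_def verts_def by (metis card.infinite finite_Union zero_neq_numeral)

lemma is_graph_complete_graph: "finite V \<Longrightarrow> is_graph (complete_graph V)"
  unfolding is_graph_def complete_graph_def by (auto intro: finite_subset[of _ "Pow V"])

lemma subset_complete_graph_verts: "is_graph E \<Longrightarrow> E \<subseteq> complete_graph (verts E)"
  unfolding is_graph_def complete_graph_def verts_def by blast

lemma edge_eq_doubleton: "card e = 2 \<Longrightarrow> v \<in> e \<Longrightarrow> \<exists>u. u \<noteq> v \<and> e = {v, u}"
  by (metis card_2_iff insert_commute insertE singletonD)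

lemma inj_doubleton: "inj (\<lambda>u. {v, u})"
  by (auto simp: inj_on_def doubleton_eq_iff)

lemma complete_graph_insert:
  assumes "v \<notin> W"
  shows "complete_graph (insert v W) = complete_graph W \<union> (\<lambda>y. {v, y}) ` W"
proof
  show "complete_graph (insert v W) \<subseteq> complete_graph W \<union> (\<lambda>y. {v, y}) ` W"
  proof
    fix e
    assume e: "e \<in> complete_graph (insert v W)"
    then have "card e = 2" "e \<subseteq> insert v W"
      unfolding complete_graph_def by auto
    show "e \<in> complete_graph W \<union> (\<lambda>y. {v, y}) ` W"
    proof (cases "v \<in> e")
      case True
      then obtain u where "u \<noteq> v" "e = {v, u}"
        using edge_eq_doubleton[OF \<open>card e = 2\<close>] by blast
      then show ?thesis
        using \<open>e \<subseteq> insert v W\<close> by blast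
    next
      case False
      then show ?thesis
        using \<open>card e = 2\<close> \<open>e \<subseteq> insert v W\<close> unfolding complete_graph_def by blast
    qed
  qed
  show "complete_graph W \<union> (\<lambda>y. {v, y}) ` W \<subseteq> complete_graph (insert v W)"
    using assms unfolding complete_graph_def by (auto simp: card_insert_if)
qed

definition neighbors :: "nat set set \<Rightarrow> nat \<Rightarrow> nat set" where
  "neighbors E v = {u. {v, u} \<in> E}"

lemma edges_at_eq_image_neighbors:
  assumes "is_graph E"
  shows "{e \<in> E. v \<in> e} = (\<lambda>u. {v, u}) ` neighbors E v"
  using assms edge_eq_doubleton unfolding is_graph_def neighbors_def by fastforce

lemma degree_eq_card_neighbors: "is_graph E \<Longrightarrow> degree E v = card (neighbors E v)"
  unfolding degree_def
  by (simp add: edges_at_eq_image_neighbors card_image inj_on_subset[OF inj_doubleton])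

lemma neighbors_subset:
  assumes "is_graph E"
  shows "neighbors E v \<subseteq> verts E - {v}"
proof
  fix u
  assume "u \<in> neighbors E v"
  then have "{v, u} \<in> E"
    unfolding neighbors_def by blast
  moreover have "card {v, v} \<noteq> 2"
    by simp
  ultimately show "u \<in> verts E - {v}"
    using assms unfolding is_graph_def verts_def by auto
qed

lemma card_non_neighbors:
  assumes "is_graph C" "w \<in> verts C"
  shows "card (verts C - insert w (neighbors C w)) + degree C w + 1 = card (verts C)"
proof -
  let ?S = "insert w (neighbors C w)"
  have S: "?S \<subseteq> verts C" "w \<notin> neighbors C w"
    using neighbors_subset[OF assms(1)] assms(2) by auto
  have "finite ?S"
    using finite_subset[OF S(1) finite_verts[OF assms(1)]] .
  then have "card ?S = degree C w + 1"
    using S(2) degree_eq_card_neighbors[OF assms(1)] by simp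
  moreover have "card (verts C - ?S) = card (verts C) - card ?S"
    using card_Diff_subset[OF \<open>finite ?S\<close> S(1)] .
  ultimately show ?thesis
    using card_mono[OF finite_verts[OF assms(1)] S(1)] by linarith
qed

lemma degree_less_card_verts: "is_graph E \<Longrightarrow> v \<in> verts E \<Longrightarrow> degree E v < card (verts E)"
  using card_non_neighbors[of E v] by linarith

lemma degree_Un_disjoint:
  assumes "is_graph (E1 \<union> E2)" "E1 \<inter> E2 = {}"
  shows "degree (E1 \<union> E2) v = degree E1 v + degree E2 v"
proof -
  have "{e \<in> E1 \<union> E2. v \<in> e} = {e \<in> E1. v \<in> e} \<union> {e \<in> E2. v \<in> e}"
    by blast
  then show ?thesis
    using assms card_Un_disjoint[of "{e \<in> E1. v \<in> e}" "{e \<in> E2. v \<in> e}"]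
    unfolding degree_def is_graph_def by auto
qed

lemma verts_nonempty: "is_graph E \<Longrightarrow> E \<noteq> {} \<Longrightarrow> verts E \<noteq> {}"
  unfolding is_graph_def verts_def by fastforce

lemma degree_pos: "v \<in> verts E \<Longrightarrow> is_graph E \<Longrightarrow> 0 < degree E v"
  unfolding degree_def verts_def is_graph_def by (auto simp: card_gt_0_iff)

lemma min_degree_le_degree: "is_graph E \<Longrightarrow> v \<in> verts E \<Longrightarrow> min_degree E \<le> degree E v"
  unfolding min_degree_def by (simp add: finite_verts)

lemma min_degree_attained:
  assumes "is_graph E" "E \<noteq> {}"
  obtains v where "v \<in> verts E" "degree E v = min_degree E"
  using Min_in[of "degree E ` verts E"] assms finite_verts verts_nonempty
  unfolding min_degree_def by fastforce

lemma min_degree_pos: "is_graph E \<Longrightarrow> E \<noteq> {} \<Longrightarrow> 0 < min_degree E"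
  by (metis degree_pos min_degree_attained)

lemma inj_on_image_edges:
  assumes "inj_on f (verts X)"
  shows "inj_on ((`) f) X"
proof (rule inj_onI)
  fix a b
  assume "a \<in> X" "b \<in> X" "f ` a = f ` b"
  moreover have "a \<subseteq> verts X" "b \<subseteq> verts X"
    using \<open>a \<in> X\<close> \<open>b \<in> X\<close> unfolding verts_def by blast+
  ultimately show "a = b"
    using inj_on_image_eq_iff[OF assms] by blast
qed

lemma is_graph_image:
  assumes "is_graph X" "inj_on f (verts X)"
  shows "is_graph ((`) f ` X)"
proof -
  have "card (f ` e) = 2" if "e \<in> X" for e
  proof -
    have "e \<subseteq> verts X"
      using that unfolding verts_def by blast
    then show ?thesis
      using assms that card_image[OF inj_on_subset[OF assms(2)]] unfolding is_graph_def by simp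
  qed
  then show ?thesis
    using assms(1) unfolding is_graph_def by blast
qed

lemma connected_on_edge_from:
  assumes "connected_on E W" "a \<in> W" "b \<in> W" "a \<noteq> b"
  obtains y where "y \<in> W" "{a, y} \<in> E"
proof -
  let ?R = "{(x, y). {x, y} \<in> E \<and> x \<in> W \<and> y \<in> W}"
  have "(a, b) \<in> ?R\<^sup>*"
    using assms(1-3) unfolding connected_on_def by blast
  then obtain y where "(a, y) \<in> ?R"
    using assms(4) by (blast elim: converse_rtranclE)
  then show ?thesis
    using that by blast
qed

lemma connected_on_delete_vertex:
  assumes "v \<notin> W"
  shows "connected_on {e \<in> E. v \<notin> e} W \<longleftrightarrow> connected_on E W"
proof -
  have "{(x, y). {x, y} \<in> {e \<in> E. v \<notin> e} \<and> x \<in> W \<and> y \<in> W}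
      = {(x, y). {x, y} \<in> E \<and> x \<in> W \<and> y \<in> W}"
    using assms by blast
  then show ?thesis
    unfolding connected_on_def by simp
qed

lemma connected_common_vertex:
  assumes "is_graph E" "connected_on E (verts E)" "E1 \<union> E2 = E" "E1 \<noteq> {}" "E2 \<noteq> {}"
  obtains v where "v \<in> verts E1" "v \<in> verts E2"
proof -
  have "is_graph E1" "is_graph E2"
    using assms(1,3) is_graph_subset by blast+
  then obtain a b where a: "a \<in> verts E1" and b: "b \<in> verts E2"
    using assms(4,5) verts_nonempty by blast
  let ?R = "{(x, y). {x, y} \<in> E \<and> x \<in> verts E \<and> y \<in> verts E}"
  have "(a, b) \<in> ?R\<^sup>*"
    using assms(2,3) a b unfolding connected_on_def verts_def by blast
  then have "b \<in> verts E1 \<or> (\<exists>v. v \<in> verts E1 \<and> v \<in> verts E2)"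
  proof (induction rule: rtrancl_induct)
    case (step y z)
    then have "{y, z} \<in> E1 \<or> y \<in> verts E2"
      using assms(3) unfolding verts_def by blast
    then show ?case
      using step.IH unfolding verts_def by blast
  qed (use a in blast)
  then show ?thesis
    using that b by blast
qed

lemma k_connected_card: "k_connected q E \<Longrightarrow> q < card (verts E)"
  unfolding k_connected_def by blast

lemma k_connected_mono: "k_connected q E \<Longrightarrow> p \<le> q \<Longrightarrow> k_connected p E"
  unfolding k_connected_def by auto

lemma k_connected_connected: "k_connected q E \<Longrightarrow> 0 < q \<Longrightarrow> connected_on E (verts E)"
  unfolding k_connected_def by (metis Diff_empty card.empty empty_subsetI)

lemma k_connected_degree:
  assumes "is_graph E" "k_connected q E" "v \<in> verts E"
  shows "q \<le> degree E v"
proof (rule ccontr)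
  assume "\<not> q \<le> degree E v"
  let ?N = "neighbors E v"
  have N: "?N \<subseteq> verts E - {v}" "card ?N < q"
    using assms(1) neighbors_subset degree_eq_card_neighbors \<open>\<not> q \<le> degree E v\<close> by auto
  then have "connected_on E (verts E - ?N)"
    using assms(2) unfolding k_connected_def by blast
  have "finite ?N"
    using N(1) finite_verts[OF assms(1)] finite_subset by blast
  then have "card (insert v ?N) < card (verts E)"
    using N(2) assms(2) unfolding k_connected_def by (simp add: card_insert_if)
  then have "\<not> verts E \<subseteq> insert v ?N"
    using card_mono \<open>finite ?N\<close> by (meson finite_insert leD)
  then obtain u where "u \<in> verts E - insert v ?N"
    by blast
  then obtain y where "y \<in> verts E - ?N" "{v, y} \<in> E"
    using connected_on_edge_from[OF \<open>connected_on E (verts E - ?N)\<close>, of v u] N(1) assms(3)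
    by blast
  then show False
    unfolding neighbors_def by blast
qed

lemma verts_delete_vertex:
  assumes "is_graph E" "k_connected 2 E" "v \<in> verts E"
  shows "verts {e \<in> E. v \<notin> e} = verts E - {v}"
proof
  show "verts {e \<in> E. v \<notin> e} \<subseteq> verts E - {v}"
    unfolding verts_def by blast
  show "verts E - {v} \<subseteq> verts {e \<in> E. v \<notin> e}"
  proof
    fix u
    assume u: "u \<in> verts E - {v}"
    have "connected_on E (verts E - {v})"
      using assms(2,3) unfolding k_connected_def by simp
    have "card {u, v} < card (verts E)"
      using assms(2) unfolding k_connected_def by (simp add: card_insert_if)
    then have "\<not> verts E \<subseteq> {u, v}"
      using card_mono by (meson finite.emptyI finite_insert leD)
    then obtain u' where "u' \<in> verts E - {u, v}"
      by blast
    then obtain y where "y \<in> verts E - {v}" "{u, y} \<in> E"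
      using connected_on_edge_from[OF \<open>connected_on E (verts E - {v})\<close>, of u u'] u by blast
    then have "{u, y} \<in> {e \<in> E. v \<notin> e}"
      using u by auto
    then show "u \<in> verts {e \<in> E. v \<notin> e}"
      unfolding verts_def by blast
  qed
qed

lemma k_connected_delete_vertex:
  assumes "is_graph E" "k_connected (Suc q) E" "0 < q" "v \<in> verts E"
  shows "k_connected q {e \<in> E. v \<notin> e}"
  unfolding k_connected_def
proof (intro conjI allI impI)
  have verts_eq: "verts {e \<in> E. v \<notin> e} = verts E - {v}"
    using assms k_connected_mono[OF assms(2), of 2] verts_delete_vertex by simp
  moreover have "Suc q < card (verts E)"
    using assms(2) unfolding k_connected_def by blast
  ultimately show "q < card (verts {e \<in> E. v \<notin> e})"
    using assms(4) finite_verts[OF assms(1)] by simp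
  fix X
  assume X: "X \<subseteq> verts {e \<in> E. v \<notin> e} \<and> card X < q"
  moreover have "finite X"
    using X verts_eq finite_verts[OF assms(1)] finite_subset by auto
  ultimately have "insert v X \<subseteq> verts E" "card (insert v X) < Suc q"
    using assms(4) verts_eq by (auto simp: card_insert_if)
  then have "connected_on E (verts E - insert v X)"
    using assms(2) unfolding k_connected_def by blast
  moreover have "verts E - insert v X = verts {e \<in> E. v \<notin> e} - X"
    using verts_eq by blast
  ultimately have "connected_on E (verts {e \<in> E. v \<notin> e} - X)"
    by simp
  moreover have "v \<notin> verts {e \<in> E. v \<notin> e} - X"
    using verts_eq by blast
  ultimately show "connected_on {e \<in> E. v \<notin> e} (verts {e \<in> E. v \<notin> e} - X)"
    using connected_on_delete_vertex by blast
qed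

lemma obtain_inj_on_Un:
  assumes "finite A1" "finite B1" "card A1 \<le> card B1"
    and "finite A2" "finite B2" "card A2 \<le> card B2"
    and "A1 \<inter> A2 = {}" "B1 \<inter> B2 = {}"
  obtains g where "inj_on g (A1 \<union> A2)" "g ` A1 \<subseteq> B1" "g ` A2 \<subseteq> B2"
proof -
  obtain g1 where g1: "g1 ` A1 \<subseteq> B1" "inj_on g1 A1"
    using card_le_inj[OF assms(1-3)] by blast
  obtain g2 where g2: "g2 ` A2 \<subseteq> B2" "inj_on g2 A2"
    using card_le_inj[OF assms(4-6)] by blast
  define g where "g u = (if u \<in> A1 then g1 u else g2 u)" for u
  have "\<And>u. u \<in> A1 \<Longrightarrow> g u = g1 u" "\<And>u. u \<in> A2 \<Longrightarrow> g u = g2 u"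
    using assms(7) unfolding g_def by auto
  then have "g ` A1 \<subseteq> B1" "g ` A2 \<subseteq> B2" "inj_on g A1" "inj_on g A2"
    using g1 g2 inj_on_cong[of A1 g g1] inj_on_cong[of A2 g g2] by auto
  moreover from this have "inj_on g (A1 \<union> A2)"
    using assms(8) by (auto simp: inj_on_Un)
  ultimately show ?thesis
    using that by blast
qed

lemma obtain_vertex_embedding:
  assumes "is_graph C" "w \<in> verts C" "n \<in> neighbors C w" "degree C w = card Y + 1"
    and "card (verts C) \<le> card W + 1" "finite W" "v \<notin> W" "Y \<subseteq> W" "x \<in> W - Y"
  obtains f where "inj_on f (verts C)" "f w = v" "f n = x"
    "f ` (neighbors C w - {n}) \<subseteq> Y" "f ` (verts C - {w}) \<subseteq> W"
proof -
  let ?N = "neighbors C w - {n}" and ?R = "verts C - insert w (neighbors C w)"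
  have "neighbors C w \<subseteq> verts C - {w}" "finite (verts C)"
    using neighbors_subset[OF assms(1)] finite_verts[OF assms(1)] .
  then have parts: "verts C - {w} = insert n (?N \<union> ?R)" "w \<noteq> n" "n \<notin> ?N \<union> ?R"
    "finite ?N" "finite ?R"
    using assms(2,3) finite_subset by auto
  have "card ?N \<le> card Y"
    using assms(3,4) degree_eq_card_neighbors[OF assms(1)] \<open>finite ?N\<close> by simp
  have "card (W - insert x Y) = card W - card Y - 1"
    using assms(6,8,9) card_Diff_subset[of "insert x Y" W] finite_subset[OF assms(8,6)] by simp
  then have "card ?R \<le> card (W - insert x Y)"
    using card_non_neighbors[OF assms(1,2)] assms(4,5) by linarith
  then obtain g where g: "inj_on g (?N \<union> ?R)" "g ` ?N \<subseteq> Y" "g ` ?R \<subseteq> W - insert x Y"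
    using obtain_inj_on_Un[OF parts(4) finite_subset[OF assms(8,6)] \<open>card ?N \<le> card Y\<close>
        parts(5) finite_Diff[OF assms(6)]]
    by blast
  define f where "f = g(n := x, w := v)"
  have f: "f w = v" "\<And>u. u \<in> verts C - {w} \<Longrightarrow> f u = (g(n := x)) u"
    unfolding f_def by auto
  have image: "f ` (verts C - {w}) \<subseteq> W" "f ` ?N \<subseteq> Y" "f n = x"
    using g(2,3) f(2) parts assms(8,9) by (auto simp: image_subset_iff)
  have "x \<notin> g ` (?N \<union> ?R)"
    using g(2,3) assms(9) by blast
  then have "inj_on (g(n := x)) (insert n (?N \<union> ?R))"
    using inj_on_fun_updI[OF g(1)] parts(3) by (simp add: image_subset_iff) blast
  then have "inj_on f (verts C - {w})"
    using inj_on_cong[of "verts C - {w}" f "g(n := x)"] f(2) parts(1) by simp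
  moreover have "v \<notin> f ` (verts C - {w})"
    using image(1) assms(7) by blast
  ultimately have "inj_on f (verts C)"
    using inj_on_insert[of f w "verts C - {w}"] f(1) assms(2) by (simp add: insert_absorb)
  then show ?thesis
    using that image f(1) by blast
qed

lemma obtain_edge_embedding:
  assumes "is_graph C" "w \<in> verts C" "degree C w = card Y + 1"
    and "card (verts C) \<le> card W + 1" "finite W" "v \<notin> W" "Y \<subseteq> W" "x \<in> W - Y"
  obtains f where "inj_on f (verts C)" "{v, x} \<in> (`) f ` C"
    "(`) f ` C - {{v, x}} \<subseteq> complete_graph W \<union> (\<lambda>y. {v, y}) ` Y"
proof -
  have "neighbors C w \<noteq> {}"
    using assms(1,3) degree_eq_card_neighbors by force
  then obtain n where n: "n \<in> neighbors C w"
    by blast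
  obtain f where f: "inj_on f (verts C)" "f w = v" "f n = x"
    "f ` (neighbors C w - {n}) \<subseteq> Y" "f ` (verts C - {w}) \<subseteq> W"
    using obtain_vertex_embedding[OF assms(1,2) n assms(3-8)] by blast
  have "{w, n} \<in> C"
    using n unfolding neighbors_def by simp
  moreover have "f ` {w, n} = {v, x}"
    using f(2,3) by simp
  ultimately have vx: "{v, x} \<in> (`) f ` C"
    by (metis image_eqI)
  have edge: "f ` e \<in> complete_graph W \<union> (\<lambda>y. {v, y}) ` Y"
    if e: "e \<in> C" "f ` e \<noteq> {v, x}" for e
  proof (cases "w \<in> e")
    case True
    have "card e = 2"
      using assms(1) e(1) unfolding is_graph_def by blast
    then obtain u where "e = {w, u}"
      using edge_eq_doubleton[OF _ True] by blast
    then have "u \<in> neighbors C w - {n}"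
      using e f(2,3) unfolding neighbors_def by auto
    then show ?thesis
      using f(2,4) \<open>e = {w, u}\<close> by auto
  next
    case False
    then have "e \<subseteq> verts C - {w}"
      using e(1) unfolding verts_def by blast
    then have "f ` e \<subseteq> W" "card (f ` e) = card e"
      using f(5) card_image[OF inj_on_subset[OF f(1)], of e] by auto
    then show ?thesis
      using assms(1) e(1) unfolding is_graph_def complete_graph_def by auto
  qed
  then have "(`) f ` C - {{v, x}} \<subseteq> complete_graph W \<union> (\<lambda>y. {v, y}) ` Y"
    by blast
  with vx show ?thesis
    by (rule that[OF f(1)])
qed

section \<open>Graph matroid families\<close>

lemma is_circuitD:
  assumes "is_circuit M C"
  shows "is_graph C" "C \<noteq> {}"
  using assms unfolding is_circuit_def by auto

context
  fixes M :: "nat set set \<Rightarrow> nat set set \<Rightarrow> bool"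
  assumes family: "graph_matroid_family M"
begin

lemma matroid_family: "is_graph U \<Longrightarrow> matroid U (M U)"
  using conjunct1[OF family[unfolded graph_matroid_family_def]] by (simp add: matroid_def)

lemma family_image:
  "is_graph E \<Longrightarrow> inj_on f (verts E) \<Longrightarrow> X \<subseteq> E \<Longrightarrow> M ((`) f ` E) ((`) f ` X) \<longleftrightarrow> M E X"
  using conjunct1[OF conjunct2[OF family[unfolded graph_matroid_family_def]]] by blast

lemma family_restrict: "is_graph U \<Longrightarrow> H \<subseteq> U \<Longrightarrow> M H X \<longleftrightarrow> X \<subseteq> H \<and> M U X"
  using conjunct2[OF conjunct2[OF family[unfolded graph_matroid_family_def]]] by blast

lemma grank_eq_mrank:
  assumes "is_graph U" "X \<subseteq> U"
  shows "grank M X = mrank (M U) X"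
proof -
  have "{card Y |Y. Y \<subseteq> X \<and> M X Y} = {card Y |Y. Y \<subseteq> X \<and> M U Y}"
    using family_restrict[OF assms] by blast
  then show ?thesis
    unfolding grank_def mrank_def by simp
qed

lemma grank_mono: "is_graph Y \<Longrightarrow> X \<subseteq> Y \<Longrightarrow> grank M X \<le> grank M Y"
  using grank_eq_mrank matroid.rank_mono[OF matroid_family] by (metis order_refl)

lemma grank_le_card: "is_graph X \<Longrightarrow> grank M X \<le> card X"
  using grank_eq_mrank[of X X] matroid.rank_le_card[OF matroid_family] is_graph_def by simp

lemma grank_Un_le: "is_graph (A \<union> B) \<Longrightarrow> grank M (A \<union> B) \<le> grank M A + grank M B"
  using grank_eq_mrank[of "A \<union> B"] matroid.rank_Un_le[OF matroid_family] by simp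

lemma grank_Un_le_card: "is_graph (A \<union> B) \<Longrightarrow> grank M (A \<union> B) \<le> grank M A + card B"
proof -
  assume "is_graph (A \<union> B)"
  moreover have "is_graph B"
    by (rule is_graph_subset[OF \<open>is_graph (A \<union> B)\<close>]) blast
  ultimately show ?thesis
    using grank_Un_le grank_le_card by (meson add_left_mono order_trans)
qed

lemma grank_empty: "grank M {} = 0"
  using grank_le_card[of "{}"] by (simp add: is_graph_def)

lemma is_circuit_iff_circuit:
  assumes "is_graph U" "C \<subseteq> U"
  shows "is_circuit M C \<longleftrightarrow> matroid.circuit (M U) C"
proof -
  interpret matroid U "M U"
    using matroid_family[OF assms(1)] .
  have "finite C"
    using assms finite_subset unfolding is_graph_def by blast
  have rank: "grank M Z = mrank (M U) Z" if "Z \<subseteq> C" for Z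
    using grank_eq_mrank[OF assms(1)] that assms(2) by blast
  have "grank M C < card C \<longleftrightarrow> \<not> M U C"
    using indep_iff_rank_eq_card[OF \<open>finite C\<close>] rank_le_card[OF \<open>finite C\<close>] rank[of C]
    by auto
  moreover have "grank M (C - {e}) = card C - 1 \<longleftrightarrow> M U (C - {e})" if "e \<in> C" for e
    using indep_iff_rank_eq_card[of "C - {e}"] rank[of "C - {e}"] \<open>finite C\<close> that by simp
  ultimately show ?thesis
    using is_graph_subset[OF assms] unfolding is_circuit_def circuit_def by blast
qed

lemma obtain_circuit:
  assumes "is_graph X" "grank M X < card X"
  obtains C where "C \<subseteq> X" "is_circuit M C"
proof -
  interpret matroid X "M X"
    using matroid_family[OF assms(1)] .
  have "\<not> M X X"
    using assms rank_indep grank_eq_mrank[OF assms(1)] by fastforce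
  then obtain C where "C \<subseteq> X" "circuit C"
    using dependent_contains_circuit assms(1) unfolding is_graph_def by blast
  then show ?thesis
    using that is_circuit_iff_circuit[OF assms(1)] by blast
qed

lemma grank_add_coloops:
  assumes "is_graph X" "D \<subseteq> X" "\<And>C. C \<subseteq> X \<Longrightarrow> is_circuit M C \<Longrightarrow> C \<inter> D = {}"
  shows "grank M X = grank M (X - D) + card D"
proof -
  interpret matroid X "M X"
    using matroid_family[OF assms(1)] .
  have "mrank (M X) X = mrank (M X) (X - D) + card D"
    using assms is_circuit_iff_circuit[OF assms(1)] unfolding is_graph_def
    by (intro rank_add_coloops) auto
  then show ?thesis
    using grank_eq_mrank[OF assms(1)] by simp
qed

lemma grank_Un_spanned:
  assumes "is_graph (Y \<union> F)"
    and spanned: "\<And>e. e \<in> F \<Longrightarrow> \<exists>C. is_circuit M C \<and> e \<in> C \<and> C - {e} \<subseteq> Y"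
  shows "grank M (Y \<union> F) = grank M Y"
proof -
  interpret matroid "Y \<union> F" "M (Y \<union> F)"
    using matroid_family[OF assms(1)] .
  have "mrank (M (Y \<union> F)) (insert e Y) = mrank (M (Y \<union> F)) Y" if e: "e \<in> F" for e
  proof -
    obtain C where C: "is_circuit M C" "e \<in> C" "C - {e} \<subseteq> Y"
      using spanned[OF e] by blast
    then have "circuit C"
      using is_circuit_iff_circuit[OF assms(1)] e by blast
    then show ?thesis
      using rank_insert_eq_of_circuit C(2,3) by blast
  qed
  then have "mrank (M (Y \<union> F)) (Y \<union> F) = mrank (M (Y \<union> F)) Y"
    using assms(1) unfolding is_graph_def by (intro rank_Un_eq_of_insert_eq) auto
  then show ?thesis
    using grank_eq_mrank[OF assms(1)] by simp
qed

lemma grank_image: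
  assumes "is_graph X" "inj_on f (verts X)"
  shows "grank M ((`) f ` X) = grank M X"
proof -
  have inj: "inj_on ((`) f) X"
    using assms(2) by (rule inj_on_image_edges)
  have "{card Y' |Y'. Y' \<subseteq> (`) f ` X \<and> M ((`) f ` X) Y'} = {card Y |Y. Y \<subseteq> X \<and> M X Y}"
  proof (intro equalityI subsetI)
    fix n
    assume "n \<in> {card Y' |Y'. Y' \<subseteq> (`) f ` X \<and> M ((`) f ` X) Y'}"
    then obtain Y where "Y \<subseteq> X" "M ((`) f ` X) ((`) f ` Y)" "n = card ((`) f ` Y)"
      by (auto simp: subset_image_iff)
    then show "n \<in> {card Y |Y. Y \<subseteq> X \<and> M X Y}"
      using family_image[OF assms] card_image[OF inj_on_subset[OF inj]] by auto
  next
    fix n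
    assume "n \<in> {card Y |Y. Y \<subseteq> X \<and> M X Y}"
    then obtain Y where "Y \<subseteq> X" "M X Y" "n = card Y"
      by blast
    then show "n \<in> {card Y' |Y'. Y' \<subseteq> (`) f ` X \<and> M ((`) f ` X) Y'}"
      using family_image[OF assms] card_image[OF inj_on_subset[OF inj]]
      by (intro CollectI exI[of _ "(`) f ` Y"]) auto
  qed
  then show ?thesis
    unfolding grank_def mrank_def by simp
qed

lemma is_circuit_image:
  assumes "is_circuit M C" "inj_on f (verts C)"
  shows "is_circuit M ((`) f ` C)"
proof -
  have graph: "is_graph C"
    using is_circuitD(1)[OF assms(1)] .
  have card_eq: "card ((`) f ` C) = card C"
    using card_image[OF inj_on_image_edges[OF assms(2)]] .
  have "grank M ((`) f ` C - {e'}) = card ((`) f ` C) - 1" if e': "e' \<in> (`) f ` C" for e'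
  proof -
    obtain e where e: "e \<in> C" "e' = f ` e"
      using e' by blast
    have "(`) f ` (C - {e}) = (`) f ` C - {e'}"
      using inj_on_image_set_diff[OF inj_on_image_edges[OF assms(2)], of C "{e}"] e by simp
    moreover have "verts (C - {e}) \<subseteq> verts C"
      unfolding verts_def by blast
    ultimately have "grank M ((`) f ` C - {e'}) = grank M (C - {e})"
      using grank_image[OF is_graph_subset[OF graph] inj_on_subset[OF assms(2)], of "C - {e}"]
      by simp
    then show ?thesis
      using assms(1) e(1) card_eq unfolding is_circuit_def by simp
  qed
  then show ?thesis
    using assms is_graph_image[OF graph assms(2)] grank_image[OF graph assms(2)] card_eq
    unfolding is_circuit_def by simp
qed

lemma circuit_degree_gt_dimensionality:
  assumes "is_circuit M C" "v \<in> verts C"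
  shows "dimensionality M < degree C v"
proof -
  have "dimensionality M \<le> min_degree C - 1" "0 < min_degree C"
    using assms(1) min_degree_pos[OF is_circuitD[OF assms(1)]] unfolding dimensionality_def
    by (auto intro: Least_le)
  then show ?thesis
    using min_degree_le_degree[OF is_circuitD(1)[OF assms(1)] assms(2)] by linarith
qed

lemma grank_star:
  assumes "is_graph X" "0 < dimensionality M" "\<forall>e\<in>X. v \<in> e"
  shows "grank M X = card X"
proof -
  have "C \<inter> X = {}" if C: "C \<subseteq> X" "is_circuit M C" for C
  proof (rule ccontr)
    assume "C \<inter> X \<noteq> {}"
    then obtain e where e: "e \<in> C"
      by blast
    have "card e = 2" "v \<in> e"
      using assms(1,3) C(1) e unfolding is_graph_def by auto
    then obtain u where u: "u \<noteq> v" "e = {v, u}"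
      using edge_eq_doubleton[of e v] by blast
    have "{f \<in> C. u \<in> f} \<subseteq> {e}"
    proof
      fix f
      assume f: "f \<in> {f \<in> C. u \<in> f}"
      then have "{v, u} \<subseteq> f" "card f = 2"
        using assms(1,3) C(1) unfolding is_graph_def by auto
      moreover have "finite f"
        using \<open>card f = 2\<close> by (intro card_ge_0_finite) simp
      ultimately show "f \<in> {e}"
        using card_subset_eq[of f "{v, u}"] u by simp
    qed
    then have "degree C u \<le> 1"
      unfolding degree_def using card_mono[of "{e}"] by fastforce
    moreover have "u \<in> verts C"
      using e u unfolding verts_def by blast
    ultimately show False
      using circuit_degree_gt_dimensionality[OF C(2)] assms(2) by fastforce
  qed
  then have "grank M X = grank M (X - X) + card X"
    using grank_add_coloops[OF assms(1)] by blast
  then show ?thesis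
    using grank_empty by simp
qed

lemma degree_le_grank:
  assumes "is_graph X" "0 < dimensionality M"
  shows "degree X v \<le> grank M X"
proof -
  have "is_graph {e \<in> X. v \<in> e}"
    by (rule is_graph_subset[OF assms(1)]) blast
  then have "grank M {e \<in> X. v \<in> e} = degree X v"
    unfolding degree_def by (rule grank_star[OF _ assms(2)]) blast
  moreover have "grank M {e \<in> X. v \<in> e} \<le> grank M X"
    by (rule grank_mono[OF assms(1)]) blast
  ultimately show ?thesis
    by simp
qed

lemma grank_delete_vertex_add_min:
  assumes "is_graph X"
  shows "grank M {e \<in> X. v \<notin> e} + min (degree X v) (dimensionality M) \<le> grank M X"
proof -
  obtain D where D: "D \<subseteq> {e \<in> X. v \<in> e}" "card D = min (degree X v) (dimensionality M)"
    using obtain_subset_with_card_n[of "min (degree X v) (dimensionality M)" "{e \<in> X. v \<in> e}"]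
    unfolding degree_def by auto
  let ?Z = "{e \<in> X. v \<notin> e} \<union> D"
  have Z: "?Z \<subseteq> X"
    using D(1) by blast
  have "C \<inter> D = {}" if C: "C \<subseteq> ?Z" "is_circuit M C" for C
  proof (rule ccontr)
    assume "C \<inter> D \<noteq> {}"
    then have "v \<in> verts C"
      using D(1) unfolding verts_def by blast
    moreover have "{e \<in> C. v \<in> e} \<subseteq> D"
      using C(1) by blast
    then have "degree C v \<le> card D"
      unfolding degree_def using card_mono[OF finite_subset[OF D(1)]] assms
      unfolding is_graph_def by simp
    ultimately show False
      using circuit_degree_gt_dimensionality[OF C(2)] D(2) by fastforce
  qed
  then have "grank M ?Z = grank M (?Z - D) + card D"
    using grank_add_coloops[OF is_graph_subset[OF assms Z]] by blast
  moreover have "?Z - D = {e \<in> X. v \<notin> e}"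
    using D(1) by blast
  moreover have "grank M ?Z \<le> grank M X"
    using grank_mono[OF assms Z] .
  ultimately show ?thesis
    using D(2) by simp
qed

lemma threshold_circuit:
  assumes "nontrivial_family M"
  obtains C w where "is_circuit M C" "w \<in> verts C" "degree C w = dimensionality M + 1"
    "card (verts C) = threshold M + 1"
proof -
  obtain E where "is_graph E" "grank M E < card E"
    using assms unfolding nontrivial_family_def by blast
  then obtain C1 where "is_circuit M C1"
    using obtain_circuit by blast
  then have "\<exists>d C. is_circuit M C \<and> d = min_degree C - 1"
    by blast
  then have "\<exists>C. is_circuit M C \<and> dimensionality M = min_degree C - 1"
    unfolding dimensionality_def by (rule LeastI_ex)
  then obtain C2 where C2: "is_circuit M C2" "dimensionality M = min_degree C2 - 1"
    by blast
  have "0 < min_degree C2"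
    using min_degree_pos[OF is_circuitD[OF C2(1)]] .
  then have "\<exists>t C. is_circuit M C \<and> min_degree C = dimensionality M + 1
      \<and> t = card (verts C) - 1"
    using C2 by (metis Suc_diff_1 Suc_eq_plus1)
  then have "\<exists>C. is_circuit M C \<and> min_degree C = dimensionality M + 1
      \<and> threshold M = card (verts C) - 1"
    unfolding threshold_def by (rule LeastI_ex)
  then obtain C where C: "is_circuit M C" "min_degree C = dimensionality M + 1"
    "threshold M = card (verts C) - 1"
    by blast
  obtain w where w: "w \<in> verts C" "degree C w = min_degree C"
    using min_degree_attained[OF is_circuitD[OF C(1)]] .
  then have "0 < card (verts C)"
    using finite_verts[OF is_circuitD(1)[OF C(1)]] card_gt_0_iff by blast
  then have "card (verts C) = threshold M + 1"
    using C(3) by simp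
  then show ?thesis
    using that C(1,2) w by simp
qed

lemma dimensionality_less_threshold:
  assumes "nontrivial_family M"
  shows "dimensionality M < threshold M"
proof -
  obtain C w where "is_circuit M C" "w \<in> verts C" "degree C w = dimensionality M + 1"
    "card (verts C) = threshold M + 1"
    using threshold_circuit[OF assms] .
  then show ?thesis
    using degree_less_card_verts[OF is_circuitD(1)] by fastforce
qed

lemma grank_complete_graph_insert_le:
  assumes "nontrivial_family M" "finite W" "threshold M \<le> card W" "v \<notin> W"
  shows "grank M (complete_graph (insert v W)) \<le> grank M (complete_graph W) + dimensionality M"
proof -
  let ?d = "dimensionality M"
  obtain C w where C: "is_circuit M C" "w \<in> verts C" "degree C w = ?d + 1"
    "card (verts C) = threshold M + 1"
    using threshold_circuit[OF assms(1)] .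
  have graph_C: "is_graph C"
    using is_circuitD(1)[OF C(1)] .
  have card_C: "card (verts C) \<le> card W + 1"
    using C(4) assms(3) by simp
  have "?d \<le> card W"
    using dimensionality_less_threshold[OF assms(1)] assms(3) by linarith
  then obtain Y where Y: "Y \<subseteq> W" "card Y = ?d"
    by (meson obtain_subset_with_card_n)
  let ?H = "complete_graph W \<union> (\<lambda>y. {v, y}) ` Y"
  let ?F = "(\<lambda>y. {v, y}) ` (W - Y)"
  have K: "complete_graph (insert v W) = ?H \<union> ?F"
    using complete_graph_insert[OF assms(4)] Y(1) by blast
  have graph: "is_graph (?H \<union> ?F)"
    unfolding K[symmetric] using assms(2) by (simp add: is_graph_complete_graph)
  have "grank M (?H \<union> ?F) = grank M ?H"
  proof (rule grank_Un_spanned[OF graph])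
    \<comment> \<open>each edge of ?F closes a copy of the threshold circuit placed with w at v\<close>
    fix e
    assume "e \<in> ?F"
    then obtain x where x: "x \<in> W - Y" "e = {v, x}"
      by blast
    obtain f where f: "inj_on f (verts C)" "{v, x} \<in> (`) f ` C"
      "(`) f ` C - {{v, x}} \<subseteq> ?H"
      using obtain_edge_embedding[OF graph_C C(2) C(3)[folded Y(2)] card_C assms(2,4) Y(1) x(1)] .
    then show "\<exists>C'. is_circuit M C' \<and> e \<in> C' \<and> C' - {e} \<subseteq> ?H"
      using is_circuit_image[OF C(1) f(1)] x(2) by blast
  qed
  moreover have "grank M ?H \<le> grank M (complete_graph W) + card ((\<lambda>y. {v, y}) ` Y)"
    by (rule grank_Un_le_card, rule is_graph_subset[OF graph]) blast
  moreover have "card ((\<lambda>y. {v, y}) ` Y) \<le> ?d"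
    using card_image_le[OF finite_subset[OF Y(1) assms(2)]] Y(2) by metis
  ultimately show ?thesis
    using K by simp
qed

lemma dimensionality_pos:
  assumes "nontrivial_family M" "unbounded_family M"
  shows "0 < dimensionality M"
proof (rule ccontr)
  \<comment> \<open>for d = 0 the ranks of all complete graphs would be bounded by that of K {0..<t}\<close>
  assume "\<not> 0 < dimensionality M"
  let ?K = "\<lambda>n. grank M (complete_graph {0..<n})"
  let ?t = "threshold M"
  have above: "?K (?t + n) \<le> ?K ?t" for n
  proof (induction n)
    case (Suc n)
    have "{0..<?t + Suc n} = insert (?t + n) {0..<?t + n}"
      by auto
    then have "?K (?t + Suc n) \<le> ?K (?t + n)"
      using grank_complete_graph_insert_le[OF assms(1), of "{0..<?t + n}" "?t + n"]
        \<open>\<not> 0 < dimensionality M\<close> by simp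
    then show ?case
      using Suc.IH by linarith
  qed simp
  have "?K n \<le> ?K ?t" for n
  proof (cases "?t \<le> n")
    case True
    then show ?thesis
      using above[of "n - ?t"] by simp
  next
    case False
    then have "complete_graph {0..<n} \<subseteq> complete_graph {0..<?t}"
      unfolding complete_graph_def by auto
    then show ?thesis
      using grank_mono[OF is_graph_complete_graph] by blast
  qed
  then show False
    using assms(2) unfolding unbounded_family_def by (meson not_less)
qed

lemma grank_delete_vertex_le:
  assumes "nontrivial_family M" "lovasz_yemini M c" "is_graph E"
    and "k_connected (Suc (max (threshold M) c)) E" "v \<in> verts E"
  shows "grank M E \<le> grank M {e \<in> E. v \<notin> e} + dimensionality M"
proof -
  let ?G = "{e \<in> E. v \<notin> e}" and ?W = "verts E - {v}"
  have "0 < threshold M"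
    using dimensionality_less_threshold[OF assms(1)] by linarith
  then have "k_connected (max (threshold M) c) ?G"
    using k_connected_delete_vertex[OF assms(3,4) _ assms(5)] by simp
  moreover have "is_graph ?G"
    by (rule is_graph_subset[OF assms(3)]) blast
  ultimately have "rigid M ?G"
    using assms(2) k_connected_mono unfolding lovasz_yemini_def by simp
  moreover have "verts ?G = ?W"
    using verts_delete_vertex[OF assms(3) k_connected_mono[OF assms(4)] assms(5)] \<open>0 < threshold M\<close>
    by simp
  ultimately have rigid: "grank M ?G = grank M (complete_graph ?W)"
    unfolding rigid_def by simp
  have "finite ?W" "threshold M \<le> card ?W"
    using k_connected_card[OF assms(4)] finite_verts[OF assms(3)] assms(5) by auto
  have "grank M E \<le> grank M (complete_graph (insert v ?W))"
    using grank_mono[OF is_graph_complete_graph subset_complete_graph_verts[OF assms(3)]]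
      finite_verts[OF assms(3)] assms(5) by (simp add: insert_absorb)
  also have "\<dots> \<le> grank M (complete_graph ?W) + dimensionality M"
    by (rule grank_complete_graph_insert_le[OF assms(1) \<open>finite ?W\<close> \<open>threshold M \<le> card ?W\<close>])
      blast
  finally show ?thesis
    using rigid by simp
qed

(* Read r, r', r1, r2, x, y as the ranks of G, G - v, E1, E2, E1 - v, E2 - v and a1, a2 as the
   degrees of v in E1, E2; the first hypothesis is the induction hypothesis for G - v. *)
lemma bipartition_bound_step_arith:
  fixes r r' r1 r2 x y a1 a2 d k :: nat
  assumes "r' + min k (min x y) \<le> x + y"
    and "x + min a1 d \<le> r1" "y + min a2 d \<le> r2" "r \<le> r' + d"
    and "a1 \<le> r1" "a2 \<le> r2" "x \<le> r'" "y \<le> r'"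
    and "0 < a1" "0 < a2" "0 < d" "d + k + 2 \<le> a1 + a2"
  shows "r + min (Suc k) (min r1 r2) \<le> r1 + r2"
  using assms unfolding min_def by (simp split: if_splits)

lemma grank_bipartition_step:
  assumes "nontrivial_family M" "unbounded_family M" "lovasz_yemini M c"
    and "is_graph E" "k_connected (max (threshold M) c + Suc k) E"
    and "E1 \<union> E2 = E" "E1 \<inter> E2 = {}"
    and "v \<in> verts E1" "v \<in> verts E2"
    and IH: "grank M {e \<in> E. v \<notin> e}
        + min k (min (grank M {e \<in> E1. v \<notin> e}) (grank M {e \<in> E2. v \<notin> e}))
      \<le> grank M {e \<in> E1. v \<notin> e} + grank M {e \<in> E2. v \<notin> e}"
  shows "grank M E + min (Suc k) (min (grank M E1) (grank M E2)) \<le> grank M E1 + grank M E2"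
proof -
  let ?d = "dimensionality M"
  have d: "0 < ?d" "?d < threshold M"
    using dimensionality_pos[OF assms(1,2)] dimensionality_less_threshold[OF assms(1)] .
  have "v \<in> verts E"
    using assms(6,8) unfolding verts_def by blast
  have "is_graph {e \<in> E. v \<notin> e}"
    by (rule is_graph_subset[OF assms(4)]) blast
  have drop: "grank M E \<le> grank M {e \<in> E. v \<notin> e} + ?d"
    using grank_delete_vertex_le[OF assms(1,3,4) k_connected_mono[OF assms(5)] \<open>v \<in> verts E\<close>]
    by simp
  have graphs: "is_graph E1" "is_graph E2"
    using is_graph_subset[OF assms(4)] assms(6) by auto
  have "max (threshold M) c + Suc k \<le> degree E1 v + degree E2 v"
    using k_connected_degree[OF assms(4,5) \<open>v \<in> verts E\<close>] degree_Un_disjoint assms(4,6,7)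
    by metis
  then have sum: "?d + k + 2 \<le> degree E1 v + degree E2 v"
    using d by linarith
  have parts: "{e \<in> E1. v \<notin> e} \<subseteq> {e \<in> E. v \<notin> e}" "{e \<in> E2. v \<notin> e} \<subseteq> {e \<in> E. v \<notin> e}"
    using assms(6) by blast+
  show ?thesis
    by (rule bipartition_bound_step_arith[OF IH grank_delete_vertex_add_min[OF graphs(1)]
        grank_delete_vertex_add_min[OF graphs(2)] drop
        degree_le_grank[OF graphs(1) d(1)] degree_le_grank[OF graphs(2) d(1)]
        grank_mono[OF \<open>is_graph {e \<in> E. v \<notin> e}\<close> parts(1)]
        grank_mono[OF \<open>is_graph {e \<in> E. v \<notin> e}\<close> parts(2)]
        degree_pos[OF assms(8) graphs(1)] degree_pos[OF assms(9) graphs(2)] d(1) sum])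
qed

lemma grank_bipartition_bound:
  assumes "nontrivial_family M" "unbounded_family M" "lovasz_yemini M c"
    and "is_graph E" "k_connected (max (threshold M) c + k) E" "E1 \<union> E2 = E" "E1 \<inter> E2 = {}"
  shows "grank M E + min k (min (grank M E1) (grank M E2)) \<le> grank M E1 + grank M E2"
  using assms(4-7)
proof (induction k arbitrary: E E1 E2)
  case 0
  then show ?case
    using grank_Un_le[of E1 E2] by simp
next
  case (Suc k)
  show ?case
  proof (cases "E1 = {} \<or> E2 = {}")
    case True
    then show ?thesis
      using Suc.prems(3) grank_empty by auto
  next
    case False
    obtain v where v: "v \<in> verts E1" "v \<in> verts E2"
      using connected_common_vertex[OF Suc.prems(1) k_connected_connected[OF Suc.prems(2)]]
        Suc.prems(3) False by auto
    then have "v \<in> verts E"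
      using Suc.prems(3) unfolding verts_def by blast
    let ?G = "{e \<in> E. v \<notin> e}"
    have "is_graph ?G"
      by (rule is_graph_subset[OF Suc.prems(1)]) blast
    have "0 < max (threshold M) c + k"
      using dimensionality_less_threshold[OF assms(1)] by (simp add: less_max_iff_disj)
    then have "k_connected (max (threshold M) c + k) ?G"
      using k_connected_delete_vertex[OF Suc.prems(1) _ _ \<open>v \<in> verts E\<close>] Suc.prems(2) by simp
    moreover have "{e \<in> E1. v \<notin> e} \<union> {e \<in> E2. v \<notin> e} = ?G"
      "{e \<in> E1. v \<notin> e} \<inter> {e \<in> E2. v \<notin> e} = {}"
      using Suc.prems(3,4) by blast+
    ultimately show ?thesis
      using grank_bipartition_step[OF assms(1-3) Suc.prems v] Suc.IH[OF \<open>is_graph ?G\<close>] by blast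
  qed
qed

end

theorem proposition3p7:
  fixes M :: "nat set set \<Rightarrow> nat set set \<Rightarrow> bool"
    and E :: "nat set set" and c k :: nat
  assumes "is_graph E"
    and "graph_matroid_family M"
    and "nontrivial_family M"
    and "unbounded_family M"
    and "lovasz_yemini M c"
    and "0 < k"
    and "k_connected (max (threshold M) c + k) E"
  shows "vertically_connected (M E) E (k + 1)"
proof (rule vertically_connected_if_rank_bound)
  note family = assms(2)
  have rank: "mrank (M E) X = grank M X" if "X \<subseteq> E" for X
    using grank_eq_mrank[OF family assms(1) that] by simp
  have d: "0 < dimensionality M" "dimensionality M < threshold M"
    using dimensionality_pos[OF family assms(3,4)] dimensionality_less_threshold[OF family assms(3)] .
  obtain v where "v \<in> verts E"
    using k_connected_card[OF assms(7)] by fastforce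
  then have "max (threshold M) c + k \<le> degree E v"
    using k_connected_degree[OF assms(1,7)] by blast
  then show "k + 1 \<le> mrank (M E) E"
    using degree_le_grank[OF family assms(1) d(1), of v] rank[OF order_refl] d by linarith
  fix E1 E2
  assume "E1 \<union> E2 = E" "E1 \<inter> E2 = {}"
  then show "mrank (M E) E + min k (min (mrank (M E) E1) (mrank (M E) E2))
      \<le> mrank (M E) E1 + mrank (M E) E2"
    using grank_bipartition_bound[OF family assms(3-5,1,7)] rank by auto
qed

end
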